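(* Let $G$ be a compactly generated, totally disconnected, locally compact group with modular function $\Delta$, and let $\Gamma$ be a Cayley–Abels graph for $G$. For an arc $(\alpha,\beta)$ of $\Gamma$ put $\Delta_{(\alpha,\beta)} = |\beta G_\alpha| / |\alpha G_\beta|$, where $\beta G_\alpha$ denotes the orbit of $\beta$ under the stabilizer $G_\alpha$. If $g\in G$ and $(\alpha_0,\dots,\alpha_s)$ is an $s$-arc in $\Gamma$ with $\alpha_0 g=\alpha_s$, then $$\Delta(g)=\Delta_{(\alpha_0,\alpha_1)}\Delta_{(\alpha_1,\alpha_2)}\cdots\Delta_{(\alpha_{s-1},\alpha_s)}.$$ In particular, the image of $\Delta$ is the subgroup of the multiplicative group $\mathbb{Q}^{+}$ generated by the labels $\Delta_{(\alpha,\beta)}$ of the arcs of $\Gamma$.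
   Context: Groups act on the right. A Cayley–Abels graph for a totally disconnected, locally compact group $G$ is a connected, locally finite simple graph with an action of $G$ by automorphisms that is vertex-transitive with compact open vertex stabilizers. The modular function $\Delta\colon G\to\mathbb{R}^{+}$ is defined via a right-invariant Haar measure $\mu$ by $\mu(gA)=\Delta(g)\mu(A)$ for measurable $A$; equivalently, for any compact open subgroup $U$, $\Delta(g)=|U:U\cap g^{-1}Ug|/|g^{-1}Ug:U\cap g^{-1}Ug|$. An arc is an ordered pair of adjacent vertices; an $s$-arc is a sequence $(\alpha_0,\dots,\alpha_s)$ of vertices with $\alpha_i,\alpha_{i+1}$ adjacent for all $i$ and $\alpha_{i-1}\ne\alpha_{i+1}$ for $1\le i\le s-1$. *)

theory Defs
  imports "HOL-Analysis.Abstract_Topological_Spaces" "HOL-Algebra.Generated_Groups" "HOL-Algebra.Coset"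
begin

definition topological_group :: "('g, 'b) monoid_scheme \<Rightarrow> 'g topology \<Rightarrow> bool" where
  "topological_group G T \<longleftrightarrow> group G \<and> topspace T = carrier G
     \<and> continuous_map (prod_topology T T) T (\<lambda>(x, y). x \<otimes>\<^bsub>G\<^esub> y)
     \<and> continuous_map T T (\<lambda>x. inv\<^bsub>G\<^esub> x)"

definition totally_disconnected_space :: "'a topology \<Rightarrow> bool" where
  "totally_disconnected_space T \<longleftrightarrow> (\<forall>S. connectedin T S \<longrightarrow> (\<exists>a. S \<subseteq> {a}))"

definition tdlc_group :: "('g, 'b) monoid_scheme \<Rightarrow> 'g topology \<Rightarrow> bool" where
  "tdlc_group G T \<longleftrightarrow> topological_group G T \<and> totally_disconnected_space T
     \<and> locally_compact_space T"

definition compactly_generated :: "('g, 'b) monoid_scheme \<Rightarrow> 'g topology \<Rightarrow> bool" where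
  "compactly_generated G T \<longleftrightarrow>
     (\<exists>K. K \<subseteq> carrier G \<and> compactin T K \<and> generate G K = carrier G)"

definition compact_open_subgroup :: "('g, 'b) monoid_scheme \<Rightarrow> 'g topology \<Rightarrow> 'g set \<Rightarrow> bool" where
  "compact_open_subgroup G T U \<longleftrightarrow> subgroup U G \<and> compactin T U \<and> openin T U"

definition sg_index :: "('g, 'b) monoid_scheme \<Rightarrow> 'g set \<Rightarrow> 'g set \<Rightarrow> nat" where
  "sg_index G U H = card ((\<lambda>u. H #>\<^bsub>G\<^esub> u) ` U)"

definition conj_set :: "('g, 'b) monoid_scheme \<Rightarrow> 'g \<Rightarrow> 'g set \<Rightarrow> 'g set" where
  "conj_set G g U = (\<lambda>u. inv\<^bsub>G\<^esub> g \<otimes>\<^bsub>G\<^esub> u \<otimes>\<^bsub>G\<^esub> g) ` U"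

text \<open>Delta(g) = |U : U \<inter> g^-1 U g| / |g^-1 U g : U \<inter> g^-1 U g| for a (any) compact open
  subgroup U; here U is an arbitrary chosen one.\<close>
definition modular_fn :: "('g, 'b) monoid_scheme \<Rightarrow> 'g topology \<Rightarrow> 'g \<Rightarrow> real" where
  "modular_fn G T g =
     (let U = (SOME U. compact_open_subgroup G T U); W = conj_set G g U
      in real (sg_index G U (U \<inter> W)) / real (sg_index G W (U \<inter> W)))"

definition stabilizer :: "('g, 'b) monoid_scheme \<Rightarrow> ('v \<Rightarrow> 'g \<Rightarrow> 'v) \<Rightarrow> 'v \<Rightarrow> 'g set" where
  "stabilizer G act v = {g \<in> carrier G. act v g = v}"

definition orbit_under :: "('v \<Rightarrow> 'g \<Rightarrow> 'v) \<Rightarrow> 'v \<Rightarrow> 'g set \<Rightarrow> 'v set" where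
  "orbit_under act v H = (\<lambda>h. act v h) ` H"

definition cayley_abels_graph ::
  "('g, 'b) monoid_scheme \<Rightarrow> 'g topology \<Rightarrow> 'v set \<Rightarrow> ('v \<Rightarrow> 'v \<Rightarrow> bool) \<Rightarrow> ('v \<Rightarrow> 'g \<Rightarrow> 'v) \<Rightarrow> bool" where
  "cayley_abels_graph G T V E act \<longleftrightarrow>
     V \<noteq> {}
     \<comment> \<open>simple graph on V\<close>
     \<and> (\<forall>u v. E u v \<longrightarrow> u \<in> V \<and> v \<in> V \<and> u \<noteq> v \<and> E v u)
     \<comment> \<open>connected\<close>
     \<and> (\<forall>u\<in>V. \<forall>v\<in>V. E\<^sup>*\<^sup>* u v)
     \<comment> \<open>locally finite\<close>
     \<and> (\<forall>v\<in>V. finite {w. E v w})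
     \<comment> \<open>right action of G on V by automorphisms\<close>
     \<and> (\<forall>v\<in>V. \<forall>g\<in>carrier G. act v g \<in> V)
     \<and> (\<forall>v\<in>V. act v \<one>\<^bsub>G\<^esub> = v)
     \<and> (\<forall>v\<in>V. \<forall>g\<in>carrier G. \<forall>h\<in>carrier G. act (act v g) h = act v (g \<otimes>\<^bsub>G\<^esub> h))
     \<and> (\<forall>u\<in>V. \<forall>v\<in>V. \<forall>g\<in>carrier G. E u v \<longleftrightarrow> E (act u g) (act v g))
     \<comment> \<open>vertex-transitive\<close>
     \<and> (\<forall>u\<in>V. \<forall>v\<in>V. \<exists>g\<in>carrier G. act u g = v)
     \<comment> \<open>compact open vertex stabilizers\<close>
     \<and> (\<forall>v\<in>V. compactin T (stabilizer G act v) \<and> openin T (stabilizer G act v))"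

definition arc_label :: "('g, 'b) monoid_scheme \<Rightarrow> ('v \<Rightarrow> 'g \<Rightarrow> 'v) \<Rightarrow> 'v \<Rightarrow> 'v \<Rightarrow> real" where
  "arc_label G act a b =
     real (card (orbit_under act b (stabilizer G act a)))
     / real (card (orbit_under act a (stabilizer G act b)))"

definition s_arc :: "'v set \<Rightarrow> ('v \<Rightarrow> 'v \<Rightarrow> bool) \<Rightarrow> nat \<Rightarrow> (nat \<Rightarrow> 'v) \<Rightarrow> bool" where
  "s_arc V E s a \<longleftrightarrow> (\<forall>i\<le>s. a i \<in> V) \<and> (\<forall>i<s. E (a i) (a (Suc i)))
     \<and> (\<forall>i. 0 < i \<and> i < s \<longrightarrow> a (i - 1) \<noteq> a (Suc i))"

inductive_set mult_generated :: "real set \<Rightarrow> real set" for S where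
  one: "1 \<in> mult_generated S"
| mul: "x \<in> mult_generated S \<Longrightarrow> s \<in> S \<Longrightarrow> x * s \<in> mult_generated S"
| dvd: "x \<in> mult_generated S \<Longrightarrow> s \<in> S \<Longrightarrow> x / s \<in> mult_generated S"

end

theory Submission
  imports Defs
begin

text \<open>For compact open subgroups \<open>A\<close>, \<open>B\<close> put \<open>r(A, B) = |A : A \<inter> B| / |B : A \<inter> B|\<close>.
  Computing all indices relative to \<open>A \<inter> B \<inter> C\<close> (the Lagrange tower law) shows
  \<open>r(A, B) r(B, C) = r(A, C)\<close>; together with \<open>r(A, A) = 1\<close> and invariance under conjugation this
  makes \<open>\<Delta>(g) = r(U, g\<^sup>-\<^sup>1 U g)\<close> independent of \<open>U\<close>, and multiplicative.
  Taking \<open>U = G\<^sub>\<alpha>\<close>, so that \<open>g\<^sup>-\<^sup>1 U g = G\<^bsub>\<alpha> g\<^esub>\<close>, orbit--stabilizer identifies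
  \<open>r(G\<^sub>\<alpha>, G\<^sub>\<beta>)\<close> with the label \<open>\<Delta>\<^bsub>(\<alpha>,\<beta>)\<^esub>\<close>, and the cocycle identity telescopes along any walk
  from \<open>\<alpha>\<close> to \<open>\<alpha> g\<close>. Conversely every label is a value of \<open>\<Delta>\<close> by vertex transitivity, so the
  image of \<open>\<Delta>\<close> is the group generated by the labels.\<close>

section \<open>Indices and conjugates of subgroups\<close>

lemma card_image_eq_if_same_fibres:
  assumes "\<And>x y. x \<in> X \<Longrightarrow> y \<in> X \<Longrightarrow> f x = f y \<longleftrightarrow> g x = g y"
  shows "card (f ` X) = card (g ` X)"
proof (rule bij_betw_same_card)
  let ?h = "\<lambda>c. g (inv_into X f c)"
  have h_f: "?h (f x) = g x" if "x \<in> X" for x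
  proof -
    from that have "f x \<in> f ` X" by (rule imageI)
    from assms[OF inv_into_into[OF this] that] f_inv_into_f[OF this] show ?thesis by simp
  qed
  show "bij_betw ?h (f ` X) (g ` X)"
  proof (rule bij_betw_imageI)
    show "inj_on ?h (f ` X)"
    proof (rule inj_onI)
      fix c c' assume "c \<in> f ` X" "c' \<in> f ` X" and eq: "?h c = ?h c'"
      then obtain x y where "x \<in> X" "y \<in> X" "c = f x" "c' = f y" by blast
      with eq show "c = c'" using h_f assms by simp
    qed
    show "?h ` f ` X = g ` X"
      by (simp add: image_image h_f cong: image_cong)
  qed
qed

lemma finite_image_if_coarser:
  assumes "\<And>x y. x \<in> X \<Longrightarrow> y \<in> X \<Longrightarrow> f x = f y \<Longrightarrow> g x = g y" and "finite (f ` X)"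
  shows "finite (g ` X)"
proof -
  have "g (inv_into X f (f x)) = g x" if "x \<in> X" for x
  proof -
    from that have "f x \<in> f ` X" by (rule imageI)
    from assms(1)[OF inv_into_into[OF this] that f_inv_into_f[OF this]] show ?thesis .
  qed
  then have "g ` X = (\<lambda>c. g (inv_into X f c)) ` f ` X"
    by (simp add: image_image cong: image_cong)
  then show ?thesis using assms(2) by simp
qed

context group
begin

lemma mult_inv_cancel_left [simp]:
  "x \<in> carrier G \<Longrightarrow> y \<in> carrier G \<Longrightarrow> x \<otimes> (inv x \<otimes> y) = y"
  "x \<in> carrier G \<Longrightarrow> y \<in> carrier G \<Longrightarrow> inv x \<otimes> (x \<otimes> y) = y"
  by (simp_all add: m_assoc[symmetric])

lemma rcos_eq_iff:
  assumes "subgroup H G" "x \<in> carrier G" "y \<in> carrier G"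
  shows "H #> x = H #> y \<longleftrightarrow> x \<otimes> inv y \<in> H"
  using assms repr_independence rcos_self subgroup.rcos_module[OF assms(1) is_group]
  by metis

lemma sg_index_self:
  assumes "subgroup H G"
  shows "sg_index G H H = 1"
proof -
  have "(\<lambda>u. H #> u) ` H = (\<lambda>_. H) ` H"
    using coset_join2[OF subgroup.mem_carrier[OF assms] assms] by (simp cong: image_cong)
  also have "\<dots> = {H}" using image_constant[OF subgroup.one_closed[OF assms]] .
  finally show ?thesis unfolding sg_index_def by simp
qed

lemma inj_on_rcos_tower:
  assumes D: "subgroup D G" and H: "subgroup H G" and "D \<subseteq> H"
    and r: "\<And>c. c \<in> C \<Longrightarrow> r c \<in> carrier G \<and> H #> r c = c"
  shows "inj_on (\<lambda>(c, d). d #> r c) (C \<times> (\<lambda>h. D #> h) ` H)"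
proof (rule inj_onI)
  have H_rcos: "H #> (k \<otimes> r b) = b" if "b \<in> C" "k \<in> H" for b k
  proof -
    have "k \<in> carrier G" "r b \<in> carrier G" using that r subgroup.mem_carrier[OF H] by auto
    then have "H #> (k \<otimes> r b) = (H #> k) #> r b"
      by (simp add: coset_mult_assoc subgroup.subset[OF H])
    also have "H #> k = H" using coset_join2[OF _ H] \<open>k \<in> carrier G\<close> that(2) by blast
    finally show ?thesis using r that(1) by simp
  qed
  fix p q assume "p \<in> C \<times> (\<lambda>h. D #> h) ` H" "q \<in> C \<times> (\<lambda>h. D #> h) ` H"
    and eq: "(\<lambda>(c, d). d #> r c) p = (\<lambda>(c, d). d #> r c) q"
  then obtain c c' h h' where pq: "p = (c, D #> h)" "q = (c', D #> h')"
    and c: "c \<in> C" "c' \<in> C" and h: "h \<in> H" "h' \<in> H"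
    by blast
  have rc: "r c \<in> carrier G" "r c' \<in> carrier G" using r c by auto
  have hc: "h \<in> carrier G" "h' \<in> carrier G" using h subgroup.mem_carrier[OF H] by auto
  from eq have "D #> (h \<otimes> r c) = D #> (h' \<otimes> r c')"
    using pq rc hc by (simp add: coset_mult_assoc subgroup.subset[OF D])
  then have in_D: "(h \<otimes> r c) \<otimes> inv (h' \<otimes> r c') \<in> D" using rcos_eq_iff[OF D] rc hc by simp
  then have "H #> (h \<otimes> r c) = H #> (h' \<otimes> r c')"
    using \<open>D \<subseteq> H\<close> rcos_eq_iff[OF H] rc hc by auto
  then have "c = c'" using H_rcos c h by simp
  moreover from in_D this have "D #> h = D #> h'"
    using rcos_eq_iff[OF D] rc hc by (simp add: m_assoc inv_mult_group)
  ultimately show "p = q" using pq by simp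
qed

lemma image_rcos_tower:
  assumes A: "subgroup A G" and H: "subgroup H G" and D: "subgroup D G" and "H \<subseteq> A"
    and r: "\<And>c. c \<in> (\<lambda>u. H #> u) ` A \<Longrightarrow> r c \<in> A \<and> H #> r c = c"
  shows "(\<lambda>(c, d). d #> r c) ` ((\<lambda>u. H #> u) ` A \<times> (\<lambda>h. D #> h) ` H) = (\<lambda>u. D #> u) ` A"
    (is "?F ` (?CH \<times> ?CD) = _")
proof (intro equalityI subsetI)
  fix x assume "x \<in> ?F ` (?CH \<times> ?CD)"
  then obtain c h where c: "c \<in> ?CH" and h: "h \<in> H" and x: "x = D #> h #> r c" by blast
  have "r c \<in> A" using r c by blast
  then have "x = D #> (h \<otimes> r c)" and "h \<otimes> r c \<in> A"
    using x h \<open>H \<subseteq> A\<close> subgroup.m_closed[OF A] subgroup.mem_carrier[OF A]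
    by (auto simp: coset_mult_assoc subgroup.subset[OF D])
  then show "x \<in> (\<lambda>u. D #> u) ` A" by blast
next
  fix x assume "x \<in> (\<lambda>u. D #> u) ` A"
  then obtain a where a: "a \<in> A" "x = D #> a" by blast
  let ?c = "H #> a"
  have c: "?c \<in> ?CH" using a by blast
  have ac: "a \<in> carrier G" "r ?c \<in> carrier G"
    using a r[OF c] subgroup.mem_carrier[OF A] by auto
  have "a \<otimes> inv (r ?c) \<in> H" using rcos_eq_iff[OF H ac] r[OF c] by metis
  then have pair: "(?c, D #> (a \<otimes> inv (r ?c))) \<in> ?CH \<times> ?CD" using c by blast
  show "x \<in> ?F ` (?CH \<times> ?CD)"
  proof (rule image_eqI[OF _ pair])
    show "x = ?F (?c, D #> (a \<otimes> inv (r ?c)))"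
      using a ac by (simp add: coset_mult_assoc subgroup.subset[OF D] m_assoc)
  qed
qed

lemma sg_index_mult:
  assumes A: "subgroup A G" and H: "subgroup H G" and D: "subgroup D G"
    and "D \<subseteq> H" "H \<subseteq> A"
  shows "sg_index G A D = sg_index G A H * sg_index G H D"
proof -
  let ?CH = "(\<lambda>u. H #> u) ` A" and ?CD = "(\<lambda>h. D #> h) ` H"
  define r where "r = inv_into A (\<lambda>u. H #> u)"
  have r: "r c \<in> A \<and> H #> r c = c" if "c \<in> ?CH" for c
    using inv_into_into[OF that] f_inv_into_f[OF that] unfolding r_def by auto
  \<comment> \<open>The coset \<open>D #> u\<close> corresponds to the pair \<open>(H #> u, D #> h)\<close> with \<open>u = h \<otimes> r (H #> u)\<close>.\<close>
  have "bij_betw (\<lambda>(c, d). d #> r c) (?CH \<times> ?CD) ((\<lambda>u. D #> u) ` A)"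
  proof (rule bij_betw_imageI)
    show "inj_on (\<lambda>(c, d). d #> r c) (?CH \<times> ?CD)"
      by (rule inj_on_rcos_tower[OF D H assms(4)]) (use r subgroup.mem_carrier[OF A] in blast)
    show "(\<lambda>(c, d). d #> r c) ` (?CH \<times> ?CD) = (\<lambda>u. D #> u) ` A"
      by (rule image_rcos_tower[OF A H D assms(5) r])
  qed
  then have "card ((\<lambda>u. D #> u) ` A) = card (?CH \<times> ?CD)"
    by (rule bij_betw_same_card[symmetric])
  then show ?thesis unfolding sg_index_def by (simp add: card_cartesian_product)
qed

lemma conj_hom:
  assumes "g \<in> carrier G"
  shows "(\<lambda>x. inv g \<otimes> x \<otimes> g) \<in> hom G G"
proof (rule homI)
  show "inv g \<otimes> x \<otimes> g \<in> carrier G" if "x \<in> carrier G" for x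
    using assms that by simp
  show "inv g \<otimes> (x \<otimes> y) \<otimes> g = (inv g \<otimes> x \<otimes> g) \<otimes> (inv g \<otimes> y \<otimes> g)"
    if "x \<in> carrier G" "y \<in> carrier G" for x y
    using assms that by (simp add: m_assoc)
qed

lemma conj_group_hom: "g \<in> carrier G \<Longrightarrow> group_hom G G (\<lambda>x. inv g \<otimes> x \<otimes> g)"
  unfolding group_hom_def group_hom_axioms_def using is_group conj_hom by blast

lemma inj_on_conj: "g \<in> carrier G \<Longrightarrow> inj_on (\<lambda>x. inv g \<otimes> x \<otimes> g) (carrier G)"
  by (rule inj_onI) simp

lemma subgroup_conj_set:
  "subgroup U G \<Longrightarrow> g \<in> carrier G \<Longrightarrow> subgroup (conj_set G g U) G"
  unfolding conj_set_def by (rule group_hom.subgroup_img_is_subgroup[OF conj_group_hom])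

lemma conj_set_Int:
  "A \<subseteq> carrier G \<Longrightarrow> B \<subseteq> carrier G \<Longrightarrow> g \<in> carrier G
    \<Longrightarrow> conj_set G g (A \<inter> B) = conj_set G g A \<inter> conj_set G g B"
  unfolding conj_set_def by (rule inj_on_image_Int[OF inj_on_conj])

lemma conj_set_one: "U \<subseteq> carrier G \<Longrightarrow> conj_set G \<one> U = U"
  unfolding conj_set_def by (auto simp: image_iff subset_iff)

lemma conj_set_mult:
  assumes "U \<subseteq> carrier G" "g \<in> carrier G" "h \<in> carrier G"
  shows "conj_set G (g \<otimes> h) U = conj_set G h (conj_set G g U)"
  unfolding conj_set_def image_image
  using assms by (intro image_cong) (auto simp: m_assoc inv_mult_group)

lemma mem_conj_set:
  assumes "U \<subseteq> carrier G" "g \<in> carrier G"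
  shows "x \<in> conj_set G g U \<longleftrightarrow> x \<in> carrier G \<and> g \<otimes> x \<otimes> inv g \<in> U"
proof
  assume "x \<in> conj_set G g U"
  then obtain u where u: "u \<in> U" "x = inv g \<otimes> u \<otimes> g" unfolding conj_set_def by blast
  moreover from u have "u \<in> carrier G" using assms(1) by blast
  ultimately show "x \<in> carrier G \<and> g \<otimes> x \<otimes> inv g \<in> U" using assms(2) by (simp add: m_assoc)
next
  assume x: "x \<in> carrier G \<and> g \<otimes> x \<otimes> inv g \<in> U"
  then have "x = inv g \<otimes> (g \<otimes> x \<otimes> inv g) \<otimes> g" using assms(2) by (simp add: m_assoc)
  with x show "x \<in> conj_set G g U" unfolding conj_set_def by blast
qed

end

lemma (in group_hom) sg_index_image:
  assumes inj: "inj_on h (carrier G)" and A: "subgroup A G" and K: "subgroup K G"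
  shows "sg_index H (h ` A) (h ` K) = sg_index G A K"
proof -
  have "h ` K #>\<^bsub>H\<^esub> h x = h ` K #>\<^bsub>H\<^esub> h y \<longleftrightarrow> K #> x = K #> y"
    if "x \<in> A" "y \<in> A" for x y
  proof -
    have xy: "x \<in> carrier G" "y \<in> carrier G"
      using subgroup.mem_carrier[OF A] that by auto
    have "h ` K #>\<^bsub>H\<^esub> h x = h ` K #>\<^bsub>H\<^esub> h y \<longleftrightarrow> h x \<otimes>\<^bsub>H\<^esub> inv\<^bsub>H\<^esub> h y \<in> h ` K"
      using xy by (intro H.rcos_eq_iff subgroup_img_is_subgroup K) simp_all
    also have "h x \<otimes>\<^bsub>H\<^esub> inv\<^bsub>H\<^esub> h y = h (x \<otimes> inv y)"
      using xy by simp
    also have "h (x \<otimes> inv y) \<in> h ` K \<longleftrightarrow> x \<otimes> inv y \<in> K"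
      using xy by (intro inj_on_image_mem_iff[OF inj] subgroup.subset[OF K]) simp
    also have "\<dots> \<longleftrightarrow> K #> x = K #> y"
      using xy by (intro G.rcos_eq_iff[symmetric] K)
    finally show ?thesis .
  qed
  then show ?thesis
    unfolding sg_index_def image_image by (rule card_image_eq_if_same_fibres)
qed

lemma (in group) sg_index_conj_set:
  assumes "subgroup A G" "subgroup K G" "g \<in> carrier G"
  shows "sg_index G (conj_set G g A) (conj_set G g K) = sg_index G A K"
  unfolding conj_set_def
  using group_hom.sg_index_image[OF conj_group_hom inj_on_conj] assms by blast

section \<open>Compact and open subgroups of topological groups\<close>

lemma topspace_topological_group: "topological_group G T \<Longrightarrow> topspace T = carrier G"
  unfolding topological_group_def by blast

lemma continuous_map_mult_topological_group:
  assumes tg: "topological_group G T" and "a \<in> carrier G" "b \<in> carrier G"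
  shows "continuous_map T T (\<lambda>x. a \<otimes>\<^bsub>G\<^esub> x \<otimes>\<^bsub>G\<^esub> b)"
proof -
  have mult: "continuous_map (prod_topology T T) T (\<lambda>(x, y). x \<otimes>\<^bsub>G\<^esub> y)"
    using tg unfolding topological_group_def by blast
  have "continuous_map T (prod_topology T T) (\<lambda>x. (a, x))"
    and "continuous_map T (prod_topology T T) (\<lambda>x. (x, b))"
    using assms by (auto intro!: continuous_map_pairedI simp: topspace_topological_group)
  from this[THEN continuous_map_compose, OF mult]
  have "continuous_map T T (\<lambda>x. a \<otimes>\<^bsub>G\<^esub> x)" and "continuous_map T T (\<lambda>x. x \<otimes>\<^bsub>G\<^esub> b)"
    by (simp_all add: o_def)
  from continuous_map_compose[OF this] show ?thesis by (simp add: o_def)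
qed

context group
begin

lemma openin_rcos:
  assumes tg: "topological_group G T" and "openin T K" "K \<subseteq> carrier G" "u \<in> carrier G"
  shows "openin T (K #> u)"
proof -
  have "K #> u = {x \<in> topspace T. \<one> \<otimes> x \<otimes> inv u \<in> K}"
  proof (intro equalityI subsetI)
    fix x assume "x \<in> K #> u"
    then obtain k where "k \<in> K" "x = k \<otimes> u" unfolding r_coset_def by blast
    then show "x \<in> {x \<in> topspace T. \<one> \<otimes> x \<otimes> inv u \<in> K}"
      using assms by (auto simp: topspace_topological_group m_assoc)
  next
    fix x assume "x \<in> {x \<in> topspace T. \<one> \<otimes> x \<otimes> inv u \<in> K}"
    then have "x \<in> carrier G" "x \<otimes> inv u \<in> K" using tg by (auto simp: topspace_topological_group)
    moreover have "x = (x \<otimes> inv u) \<otimes> u" using calculation assms by (simp add: m_assoc)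
    ultimately show "x \<in> K #> u" unfolding r_coset_def by blast
  qed
  then show ?thesis
    using openin_continuous_map_preimage[OF continuous_map_mult_topological_group[OF tg] assms(2)] assms
    by simp
qed

lemma finite_rcosets_compact:
  assumes tg: "topological_group G T" and U: "compactin T U"
    and W: "subgroup W G" "openin T W"
  shows "finite ((\<lambda>u. W #> u) ` U)"
proof -
  have Uc: "U \<subseteq> carrier G"
    using compactin_subset_topspace[OF U] topspace_topological_group[OF tg] by simp
  let ?\<U> = "(\<lambda>u. W #> u) ` U"
  have "\<forall>C\<in>?\<U>. openin T C" using openin_rcos[OF tg W(2) subgroup.subset[OF W(1)]] Uc by blast
  moreover have "U \<subseteq> \<Union>?\<U>" using rcos_self[OF _ W(1)] Uc by blast
  ultimately obtain \<F> where \<F>: "finite \<F>" "\<F> \<subseteq> ?\<U>" "U \<subseteq> \<Union>\<F>"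
    using U unfolding compactin_def by meson
  \<comment> \<open>Distinct right cosets are disjoint, so a subcover must contain every coset it meets.\<close>
  have "?\<U> \<subseteq> \<F>"
  proof
    fix C assume "C \<in> ?\<U>"
    then obtain u where u: "u \<in> U" "C = W #> u" by blast
    then obtain C' where C': "C' \<in> \<F>" "u \<in> C'" using \<F>(3) by blast
    then obtain u' where u': "u' \<in> U" "C' = W #> u'" using \<F>(2) by blast
    have "W #> u' = W #> u" using repr_independence[OF _ _ W(1)] C'(2) u' Uc by blast
    with C' u u' show "C \<in> \<F>" by simp
  qed
  then show ?thesis using \<F>(1) finite_subset by blast
qed

lemma finite_rcosets_Int_open:
  assumes tg: "topological_group G T" and U: "compactin T U" and X: "subgroup X G" "X \<subseteq> U"
    and W: "subgroup W G" "openin T W"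
  shows "finite ((\<lambda>u. (X \<inter> W) #> u) ` X)"
proof (rule finite_image_if_coarser)
  show "finite ((\<lambda>u. W #> u) ` X)"
    by (rule finite_subset[OF image_mono[OF X(2)] finite_rcosets_compact[OF tg U W]])
  fix x y assume x: "x \<in> X" and y: "y \<in> X" and eq: "W #> x = W #> y"
  have xy: "x \<in> carrier G" "y \<in> carrier G"
    using subgroup.mem_carrier[OF X(1)] x y by auto
  have "x \<otimes> inv y \<in> X"
    using subgroup.m_closed[OF X(1) x subgroup.m_inv_closed[OF X(1) y]] .
  moreover have "x \<otimes> inv y \<in> W" using eq rcos_eq_iff[OF W(1) xy] by simp
  ultimately show "(X \<inter> W) #> x = (X \<inter> W) #> y"
    using rcos_eq_iff[OF subgroups_Inter_pair[OF X(1) W(1)] xy] by simp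
qed

lemma sg_index_Int_open_pos:
  assumes "topological_group G T" "compactin T U" "subgroup X G" "X \<subseteq> U"
    and "subgroup W G" "openin T W"
  shows "0 < sg_index G X (X \<inter> W)"
  using finite_rcosets_Int_open[OF assms] subgroup.one_closed[OF assms(3)]
  unfolding sg_index_def by (auto simp: card_gt_0_iff)

lemma compact_open_subgroup_conj_set:
  assumes tg: "topological_group G T" and U: "compact_open_subgroup G T U" and g: "g \<in> carrier G"
  shows "compact_open_subgroup G T (conj_set G g U)"
proof -
  have U': "subgroup U G" "compactin T U" "openin T U"
    using U unfolding compact_open_subgroup_def by auto
  have "compactin T (conj_set G g U)"
    unfolding conj_set_def
    by (rule image_compactin[OF U'(2) continuous_map_mult_topological_group[OF tg]]) (simp_all add: g)
  moreover have "conj_set G g U = {x \<in> topspace T. g \<otimes> x \<otimes> inv g \<in> U}"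
    using mem_conj_set[OF subgroup.subset[OF U'(1)] g] topspace_topological_group[OF tg] by blast
  then have "openin T (conj_set G g U)"
    using openin_continuous_map_preimage[OF continuous_map_mult_topological_group[OF tg] U'(3)] g
    by simp
  ultimately show ?thesis
    unfolding compact_open_subgroup_def using subgroup_conj_set[OF U'(1) g] by blast
qed

end

section \<open>Index ratios and the modular function\<close>

definition index_ratio :: "('g, 'b) monoid_scheme \<Rightarrow> 'g set \<Rightarrow> 'g set \<Rightarrow> real" where
  "index_ratio G A B = real (sg_index G A (A \<inter> B)) / real (sg_index G B (A \<inter> B))"

context group
begin

lemma index_ratio_self: "subgroup A G \<Longrightarrow> index_ratio G A A = 1"
  unfolding index_ratio_def by (simp add: sg_index_self)

lemma index_ratio_conj_set:
  assumes A: "subgroup A G" and B: "subgroup B G" and g: "g \<in> carrier G"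
  shows "index_ratio G (conj_set G g A) (conj_set G g B) = index_ratio G A B"
  unfolding index_ratio_def conj_set_Int[OF subgroup.subset[OF A] subgroup.subset[OF B] g, symmetric]
  using sg_index_conj_set[OF _ subgroups_Inter_pair[OF A B] g] A B by simp

lemma index_ratio_refine:
  assumes tg: "topological_group G T" and A: "subgroup A G" "compactin T A" and B: "subgroup B G"
    and E: "subgroup E G" "openin T E"
  shows "index_ratio G A B = real (sg_index G A (A \<inter> B \<inter> E)) / real (sg_index G B (A \<inter> B \<inter> E))"
proof -
  have AB: "subgroup (A \<inter> B) G" by (rule subgroups_Inter_pair[OF A(1) B])
  have ABE: "subgroup (A \<inter> B \<inter> E) G" by (rule subgroups_Inter_pair[OF AB E(1)])
  have "0 < sg_index G (A \<inter> B) (A \<inter> B \<inter> E)"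
    by (rule sg_index_Int_open_pos[OF tg A(2) AB _ E]) blast
  moreover have "sg_index G A (A \<inter> B \<inter> E) = sg_index G A (A \<inter> B) * sg_index G (A \<inter> B) (A \<inter> B \<inter> E)"
    by (rule sg_index_mult[OF A(1) AB ABE]) blast+
  moreover have "sg_index G B (A \<inter> B \<inter> E) = sg_index G B (A \<inter> B) * sg_index G (A \<inter> B) (A \<inter> B \<inter> E)"
    by (rule sg_index_mult[OF B AB ABE]) blast+
  ultimately show ?thesis unfolding index_ratio_def by simp
qed

lemma index_ratio_trans:
  assumes tg: "topological_group G T" and A: "compact_open_subgroup G T A"
    and B: "compact_open_subgroup G T B" and C: "compact_open_subgroup G T C"
  shows "index_ratio G A B * index_ratio G B C = index_ratio G A C"
proof -
  have A': "subgroup A G" "compactin T A" "openin T A" and B': "subgroup B G" "compactin T B" "openin T B"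
    and C': "subgroup C G" "compactin T C" "openin T C"
    using A B C unfolding compact_open_subgroup_def by auto
  let ?D = "A \<inter> B \<inter> C"
  have "index_ratio G A B = real (sg_index G A ?D) / real (sg_index G B ?D)"
    by (rule index_ratio_refine[OF tg A'(1,2) B'(1) C'(1,3)])
  moreover have "index_ratio G B C = real (sg_index G B ?D) / real (sg_index G C ?D)"
    using index_ratio_refine[OF tg B'(1,2) C'(1) A'(1,3)] by (simp add: Int_ac)
  moreover have "index_ratio G A C = real (sg_index G A ?D) / real (sg_index G C ?D)"
    using index_ratio_refine[OF tg A'(1,2) C'(1) B'(1,3)] by (simp add: Int_ac)
  moreover have "0 < sg_index G B (B \<inter> (A \<inter> C))"
    by (rule sg_index_Int_open_pos[OF tg B'(2) B'(1) subset_refl subgroups_Inter_pair[OF A'(1) C'(1)]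
          openin_Int[OF A'(3) C'(3)]])
  ultimately show ?thesis by (simp add: Int_ac)
qed

lemma modular_fn_eq_index_ratio:
  assumes tg: "topological_group G T" and A: "compact_open_subgroup G T A" and g: "g \<in> carrier G"
  shows "modular_fn G T g = index_ratio G A (conj_set G g A)"
proof -
  define U where "U = (SOME U. compact_open_subgroup G T U)"
  have U: "compact_open_subgroup G T U" unfolding U_def using A by (rule someI)
  have sub: "subgroup A G" "subgroup U G"
    using A U unfolding compact_open_subgroup_def by auto
  have Ag: "compact_open_subgroup G T (conj_set G g A)"
    and Ug: "compact_open_subgroup G T (conj_set G g U)"
    using compact_open_subgroup_conj_set[OF tg _ g] A U by auto
  have "modular_fn G T g = index_ratio G U (conj_set G g U)"
    unfolding modular_fn_def index_ratio_def U_def Let_def ..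
  also have "\<dots> = index_ratio G U A * index_ratio G A (conj_set G g U)"
    using index_ratio_trans[OF tg U A Ug] by simp
  also have "index_ratio G A (conj_set G g U)
      = index_ratio G A (conj_set G g A) * index_ratio G A U"
    using index_ratio_trans[OF tg A Ag Ug] index_ratio_conj_set[OF sub g] by simp
  also have "index_ratio G U A * (index_ratio G A (conj_set G g A) * index_ratio G A U)
      = index_ratio G A (conj_set G g A) * (index_ratio G U A * index_ratio G A U)"
    by (rule mult.left_commute)
  also have "index_ratio G U A * index_ratio G A U = 1"
    using index_ratio_trans[OF tg U A U] index_ratio_self[OF sub(2)] by simp
  finally show ?thesis by simp
qed

lemma modular_fn_one:
  assumes "topological_group G T" "compact_open_subgroup G T A"
  shows "modular_fn G T \<one> = 1"
  using modular_fn_eq_index_ratio[OF assms one_closed] assms(2)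
  by (simp add: conj_set_one index_ratio_self compact_open_subgroup_def subgroup.subset)

lemma modular_fn_mult:
  assumes tg: "topological_group G T" and A: "compact_open_subgroup G T A"
    and g: "g \<in> carrier G" and h: "h \<in> carrier G"
  shows "modular_fn G T (g \<otimes> h) = modular_fn G T g * modular_fn G T h"
proof -
  have Ag: "compact_open_subgroup G T (conj_set G g A)"
    by (rule compact_open_subgroup_conj_set[OF tg A g])
  have Agh: "compact_open_subgroup G T (conj_set G (g \<otimes> h) A)"
    using compact_open_subgroup_conj_set[OF tg A] g h by simp
  have "conj_set G (g \<otimes> h) A = conj_set G h (conj_set G g A)"
    using conj_set_mult A g h unfolding compact_open_subgroup_def by (simp add: subgroup.subset)
  then show ?thesis
    using modular_fn_eq_index_ratio[OF tg A] modular_fn_eq_index_ratio[OF tg Ag h]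
      index_ratio_trans[OF tg A Ag Agh] g h
    by simp
qed

lemma modular_fn_inv:
  assumes "topological_group G T" "compact_open_subgroup G T A" "g \<in> carrier G"
  shows "modular_fn G T (inv g) = inverse (modular_fn G T g)"
  using modular_fn_mult[OF assms inv_closed[OF assms(3)]] modular_fn_one[OF assms(1,2)] assms(3)
  by (intro inverse_unique[symmetric]) simp

end

section \<open>Right actions with compact open stabilizers\<close>

locale right_action = group G for G (structure) +
  fixes V :: "'v set" and act :: "'v \<Rightarrow> 'g \<Rightarrow> 'v"
  assumes act_closed: "v \<in> V \<Longrightarrow> g \<in> carrier G \<Longrightarrow> act v g \<in> V"
    and act_one: "v \<in> V \<Longrightarrow> act v \<one> = v"
    and act_mult: "v \<in> V \<Longrightarrow> g \<in> carrier G \<Longrightarrow> h \<in> carrier G \<Longrightarrow> act (act v g) h = act v (g \<otimes> h)"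
begin

lemma act_eq_iff:
  assumes v: "v \<in> V" and x: "x \<in> carrier G" and y: "y \<in> carrier G"
  shows "act v x = act v y \<longleftrightarrow> x \<otimes> inv y \<in> stabilizer G act v"
proof -
  have xy: "x \<otimes> inv y \<in> carrier G" using x y by simp
  have "act v x = act v y \<longleftrightarrow> act v (x \<otimes> inv y) = v"
  proof
    assume "act v x = act v y"
    then show "act v (x \<otimes> inv y) = v"
      using act_mult[OF v x inv_closed[OF y]] act_mult[OF v y inv_closed[OF y]] act_one[OF v] y
      by simp
  next
    assume "act v (x \<otimes> inv y) = v"
    then show "act v x = act v y"
      using act_mult[OF v xy y] x y by (simp add: m_assoc)
  qed
  then show ?thesis unfolding stabilizer_def using xy by simp
qed

lemma subgroup_stabilizer:
  assumes v: "v \<in> V"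
  shows "subgroup (stabilizer G act v) G"
proof (rule subgroupI)
  show "stabilizer G act v \<subseteq> carrier G" unfolding stabilizer_def by blast
  show "stabilizer G act v \<noteq> {}" using act_one[OF v] unfolding stabilizer_def by blast
next
  fix a assume "a \<in> stabilizer G act v"
  then have a: "a \<in> carrier G" "act v a = act v \<one>" using act_one[OF v] unfolding stabilizer_def by auto
  then show "inv a \<in> stabilizer G act v" using act_eq_iff[OF v one_closed a(1)] by simp
next
  fix a b assume "a \<in> stabilizer G act v" "b \<in> stabilizer G act v"
  then have "a \<in> carrier G" "act v a = v" "b \<in> carrier G" "act v b = v"
    unfolding stabilizer_def by auto
  then show "a \<otimes> b \<in> stabilizer G act v"
    using act_mult[OF v, of a b] unfolding stabilizer_def by simp
qed

lemma stabilizer_act: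
  assumes v: "v \<in> V" and g: "g \<in> carrier G"
  shows "stabilizer G act (act v g) = conj_set G g (stabilizer G act v)"
proof (intro equalityI subsetI)
  fix x assume "x \<in> stabilizer G act (act v g)"
  then have x: "x \<in> carrier G" and "act v (g \<otimes> x) = act v g"
    using act_mult[OF v g] unfolding stabilizer_def by auto
  then have "g \<otimes> x \<otimes> inv g \<in> stabilizer G act v" using act_eq_iff[OF v _ g] g by simp
  then show "x \<in> conj_set G g (stabilizer G act v)"
    using mem_conj_set[OF subgroup.subset[OF subgroup_stabilizer[OF v]] g] x by simp
next
  fix x assume "x \<in> conj_set G g (stabilizer G act v)"
  then have x: "x \<in> carrier G" and "g \<otimes> x \<otimes> inv g \<in> stabilizer G act v"
    using mem_conj_set[OF subgroup.subset[OF subgroup_stabilizer[OF v]] g] by auto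
  then have "act v (g \<otimes> x) = act v g" using act_eq_iff[OF v _ g] g by simp
  then show "x \<in> stabilizer G act (act v g)"
    using act_mult[OF v g x] x unfolding stabilizer_def by simp
qed

lemma sg_index_stabilizer_eq_card_orbit:
  assumes a: "a \<in> V" and b: "b \<in> V"
  shows "sg_index G (stabilizer G act a) (stabilizer G act a \<inter> stabilizer G act b)
    = card (orbit_under act b (stabilizer G act a))"
  unfolding sg_index_def orbit_under_def
proof (rule card_image_eq_if_same_fibres)
  let ?Sa = "stabilizer G act a" and ?Sb = "stabilizer G act b"
  fix x y assume xy: "x \<in> ?Sa" "y \<in> ?Sa"
  then have c: "x \<in> carrier G" "y \<in> carrier G" unfolding stabilizer_def by auto
  have "x \<otimes> inv y \<in> ?Sa"
    using xy subgroup.m_closed subgroup.m_inv_closed subgroup_stabilizer[OF a] by metis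
  then show "(?Sa \<inter> ?Sb) #> x = (?Sa \<inter> ?Sb) #> y \<longleftrightarrow> act b x = act b y"
    using rcos_eq_iff[OF subgroups_Inter_pair[OF subgroup_stabilizer[OF a] subgroup_stabilizer[OF b]] c]
      act_eq_iff[OF b c] by simp
qed

lemma index_ratio_stabilizers:
  "a \<in> V \<Longrightarrow> b \<in> V \<Longrightarrow> index_ratio G (stabilizer G act a) (stabilizer G act b) = arc_label G act a b"
  unfolding index_ratio_def arc_label_def
  using sg_index_stabilizer_eq_card_orbit[of a b] sg_index_stabilizer_eq_card_orbit[of b a]
  by (simp add: Int_commute)

end

locale compact_open_right_action = right_action G V act for G (structure) and V act +
  fixes T :: "'g topology"
  assumes topological_group: "topological_group G T"
    and compact_open_stabilizer: "v \<in> V \<Longrightarrow> compact_open_subgroup G T (stabilizer G act v)"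
begin

lemma modular_fn_eq_arc_label:
  assumes "v \<in> V" "g \<in> carrier G"
  shows "modular_fn G T g = arc_label G act v (act v g)"
proof -
  have "modular_fn G T g = index_ratio G (stabilizer G act v) (conj_set G g (stabilizer G act v))"
    by (rule modular_fn_eq_index_ratio[OF topological_group compact_open_stabilizer assms(2)]) fact
  also have "conj_set G g (stabilizer G act v) = stabilizer G act (act v g)"
    by (rule stabilizer_act[OF assms, symmetric])
  also have "index_ratio G (stabilizer G act v) \<dots> = arc_label G act v (act v g)"
    by (rule index_ratio_stabilizers[OF assms(1) act_closed[OF assms]])
  finally show ?thesis .
qed

lemma arc_label_telescope:
  assumes "\<forall>i\<le>s. a i \<in> V"
  shows "arc_label G act (a 0) (a s) = (\<Prod>i<s. arc_label G act (a i) (a (Suc i)))"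
  using assms
proof (induction s)
  case 0
  then show ?case
    using index_ratio_stabilizers index_ratio_self subgroup_stabilizer by fastforce
next
  case (Suc s)
  then have V: "a 0 \<in> V" "a s \<in> V" "a (Suc s) \<in> V" by auto
  have "arc_label G act (a 0) (a (Suc s)) = arc_label G act (a 0) (a s) * arc_label G act (a s) (a (Suc s))"
    using index_ratio_trans[OF topological_group compact_open_stabilizer[OF V(1)]
        compact_open_stabilizer[OF V(2)] compact_open_stabilizer[OF V(3)]]
      index_ratio_stabilizers V by simp
  then show ?case using Suc by simp
qed

lemma modular_fn_walk:
  assumes "g \<in> carrier G" "\<forall>i\<le>s. a i \<in> V" "act (a 0) g = a s"
  shows "modular_fn G T g = (\<Prod>i<s. arc_label G act (a i) (a (Suc i)))"
  using modular_fn_eq_arc_label[of "a 0" g] arc_label_telescope assms by simp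

end

section \<open>Cayley--Abels graphs\<close>

lemma prod_mem_mult_generated:
  "(\<And>i. i < s \<Longrightarrow> f i \<in> S) \<Longrightarrow> (\<Prod>i<(s::nat). f i) \<in> mult_generated S"
proof (induction s)
  case 0
  then show ?case by (simp add: mult_generated.one)
next
  case (Suc s)
  then show ?case by (simp add: mult_generated.mul)
qed

lemma mult_generated_subset:
  assumes "1 \<in> M" "\<And>x s. x \<in> M \<Longrightarrow> s \<in> S \<Longrightarrow> x * s \<in> M" "\<And>x s. x \<in> M \<Longrightarrow> s \<in> S \<Longrightarrow> x / s \<in> M"
  shows "mult_generated S \<subseteq> M"
proof
  fix x assume "x \<in> mult_generated S"
  then show "x \<in> M" by (induction rule: mult_generated.induct) (use assms in auto)
qed

lemma rtranclp_imp_path: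
  assumes "E\<^sup>*\<^sup>* u v" "u \<in> V" and closed: "\<And>x y. E x y \<Longrightarrow> y \<in> V"
  obtains s a where "a 0 = u" "a s = v" "\<forall>i\<le>s. a i \<in> V" "\<forall>i<s. E (a i) (a (Suc i))"
proof -
  obtain s a where a: "a 0 = u" "a s = v" "\<forall>i<s. E (a i) (a (Suc i))"
    using assms(1) by (metis rtranclp_power relpowp_fun_conv)
  have "a i \<in> V" if "i \<le> s" for i
  proof (cases i)
    case (Suc j)
    with that a(3) have "E (a j) (a i)" by simp
    then show ?thesis by (rule closed)
  qed (use a(1) assms(2) in simp)
  with a that show ?thesis by blast
qed

context compact_open_right_action
begin

lemma arc_label_in_modular_fn_image:
  assumes transitive: "\<And>u w. u \<in> V \<Longrightarrow> w \<in> V \<Longrightarrow> \<exists>g\<in>carrier G. act u g = w"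
    and "p \<in> V" "q \<in> V"
  obtains g where "g \<in> carrier G" "modular_fn G T g = arc_label G act p q"
  using transitive[OF assms(2,3)] modular_fn_eq_arc_label[OF assms(2)] by metis

lemma modular_fn_image_subset_mult_generated:
  assumes "v \<in> V"
    and connected: "\<And>w. w \<in> V \<Longrightarrow> E\<^sup>*\<^sup>* v w"
    and edges: "\<And>u w. E u w \<Longrightarrow> w \<in> V"
  shows "modular_fn G T ` carrier G \<subseteq> mult_generated {arc_label G act x y | x y. x \<in> V \<and> y \<in> V \<and> E x y}"
    (is "_ \<subseteq> mult_generated ?L")
proof
  fix d assume "d \<in> modular_fn G T ` carrier G"
  then obtain g where g: "g \<in> carrier G" "d = modular_fn G T g" by blast
  obtain s a where a: "a 0 = v" "a s = act v g" "\<forall>i\<le>s. a i \<in> V" "\<forall>i<s. E (a i) (a (Suc i))"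
    using rtranclp_imp_path[of E v "act v g" V] connected act_closed assms(1) g(1) edges by blast
  then have "d = (\<Prod>i<s. arc_label G act (a i) (a (Suc i)))"
    using modular_fn_walk g by simp
  also have "\<dots> \<in> mult_generated ?L"
  proof (rule prod_mem_mult_generated)
    fix i assume "i < s"
    then have "a i \<in> V" "a (Suc i) \<in> V" "E (a i) (a (Suc i))" using a(3,4) by simp_all
    then show "arc_label G act (a i) (a (Suc i)) \<in> ?L" by blast
  qed
  finally show "d \<in> mult_generated ?L" .
qed

lemma mult_generated_subset_modular_fn_image:
  assumes "v \<in> V"
    and transitive: "\<And>u w. u \<in> V \<Longrightarrow> w \<in> V \<Longrightarrow> \<exists>g\<in>carrier G. act u g = w"
  shows "mult_generated {arc_label G act x y | x y. x \<in> V \<and> y \<in> V \<and> E x y} \<subseteq> modular_fn G T ` carrier G"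
proof (rule mult_generated_subset)
  have A: "compact_open_subgroup G T (stabilizer G act v)"
    by (rule compact_open_stabilizer[OF assms(1)])
  show "1 \<in> modular_fn G T ` carrier G"
    using image_eqI[of 1 "modular_fn G T" \<one>] modular_fn_one[OF topological_group A] by simp
  fix d s assume d: "d \<in> modular_fn G T ` carrier G"
    and s: "s \<in> {arc_label G act x y | x y. x \<in> V \<and> y \<in> V \<and> E x y}"
  from d obtain h where h: "h \<in> carrier G" "d = modular_fn G T h" by blast
  from s obtain p q where "p \<in> V" "q \<in> V" "s = arc_label G act p q" by blast
  then obtain g where g: "g \<in> carrier G" "s = modular_fn G T g"
    using arc_label_in_modular_fn_image[OF transitive] by metis
  have "d * s = modular_fn G T (h \<otimes> g)"
    using modular_fn_mult[OF topological_group A h(1) g(1)] h g by simp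
  then show "d * s \<in> modular_fn G T ` carrier G"
    using m_closed[OF h(1) g(1)] by blast
  have "d / s = modular_fn G T (h \<otimes> inv g)"
    using modular_fn_mult[OF topological_group A h(1) inv_closed[OF g(1)]]
      modular_fn_inv[OF topological_group A g(1)] h g
    by (simp add: divide_inverse)
  then show "d / s \<in> modular_fn G T ` carrier G"
    using m_closed[OF h(1) inv_closed[OF g(1)]] by blast
qed

end

lemma cayley_abels_graph_compact_open_right_action:
  assumes tg: "topological_group G T" and graph: "cayley_abels_graph G T V E act"
  shows "compact_open_right_action G V act T"
proof -
  have "group G" using tg unfolding topological_group_def by blast
  then have "right_action G V act"
    using graph unfolding right_action_def right_action_axioms_def cayley_abels_graph_def by blast
  then interpret right_action G V act .
  have "compact_open_subgroup G T (stabilizer G act v)" if "v \<in> V" for v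
    using graph subgroup_stabilizer[OF that] that
    unfolding cayley_abels_graph_def compact_open_subgroup_def by blast
  then show ?thesis
    using tg right_action_axioms
    unfolding compact_open_right_action_def compact_open_right_action_axioms_def by blast
qed

theorem theorem4p2:
  fixes G :: "('g, 'b) monoid_scheme" and T :: "'g topology"
    and V :: "'v set" and E :: "'v \<Rightarrow> 'v \<Rightarrow> bool" and act :: "'v \<Rightarrow> 'g \<Rightarrow> 'v"
  assumes "tdlc_group G T"
    and "compactly_generated G T"
    and "cayley_abels_graph G T V E act"
  shows "(\<forall>g s a. g \<in> carrier G \<and> s_arc V E s a \<and> act (a 0) g = a s \<longrightarrow>
            modular_fn G T g = (\<Prod>i<s. arc_label G act (a i) (a (Suc i))))
       \<and> modular_fn G T ` carrier G
           = mult_generated {arc_label G act x y | x y. x \<in> V \<and> y \<in> V \<and> E x y}"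
proof -
  have "topological_group G T" using assms(1) unfolding tdlc_group_def by blast
  then have action: "compact_open_right_action G V act T"
    using assms(3) by (rule cayley_abels_graph_compact_open_right_action)
  note graph = assms(3)[unfolded cayley_abels_graph_def]
  obtain v where v: "v \<in> V" using graph by (elim conjE) blast
  have edges: "\<And>u w. E u w \<Longrightarrow> w \<in> V" using graph by (elim conjE) blast
  have connected: "\<forall>u\<in>V. \<forall>w\<in>V. E\<^sup>*\<^sup>* u w" using graph by (elim conjE) assumption
  have transitive: "\<forall>u\<in>V. \<forall>w\<in>V. \<exists>g\<in>carrier G. act u g = w"
    using graph by (elim conjE) assumption
  show ?thesis
  proof (intro conjI allI impI)
    fix g s a assume "g \<in> carrier G \<and> s_arc V E s a \<and> act (a 0) g = a s"
    then show "modular_fn G T g = (\<Prod>i<s. arc_label G act (a i) (a (Suc i)))"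
      unfolding s_arc_def by (intro compact_open_right_action.modular_fn_walk[OF action]) blast+
  next
    show "modular_fn G T ` carrier G
        = mult_generated {arc_label G act x y | x y. x \<in> V \<and> y \<in> V \<and> E x y}"
      using compact_open_right_action.modular_fn_image_subset_mult_generated[OF action v
          connected[rule_format, OF v] edges]
        compact_open_right_action.mult_generated_subset_modular_fn_image[OF action v
          transitive[rule_format]]
      by (rule equalityI)
  qed
qed

end
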